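(* Let $Z\colon TM\setminus 0\to TM$ be a smooth vector field along $E$ (components $Z^\mu(x,y)$) and let $s\colon M\to TM\setminus 0$ be a smooth section. Then on $M$ \[ \nabla^{s^*g}\cdot s^*Z=s^*\big(\nabla^{HC}\cdot Z\big)+I_\mu(x,s(x))\,D_{s^*Z}s^\mu+\frac{\partial Z^\mu}{\partial y^\beta}(x,s(x))\,D_\mu s^\beta , \] where $s^*Z$ is the vector field $x\mapsto Z^\mu(x,s(x))\partial_\mu$ on $M$, $\nabla^{s^*g}\cdot$ denotes the divergence with respect to the Levi-Civita connection of the pseudo-Riemannian metric $s^*g$ (components $g_{\alpha\beta}(x,s(x))$), and $\nabla^{HC}\cdot Z=(\nabla^{HC}_\alpha Z)^\alpha$.
   Context: $M$ smooth $n$-manifold, $E=TM\setminus 0$, induced coordinates $\{x^\mu,y^\mu\}$. $\mathscr{L}\colon E\to\mathbb{R}$ smooth, positively homogeneous of degree two in $y$, with non-degenerate Finsler metric $g_{\mu\nu}=\partial^2\mathscr{L}/\partial y^\mu\partial y^\nu$ (any signature), inverse $g^{\mu\nu}$. Cartan torsion $C_{\alpha\beta\gamma}=\tfrac12\partial g_{\beta\gamma}/\partial y^\alpha$, mean Cartan torsion $I_\gamma=g^{\alpha\beta}C_{\alpha\beta\gamma}$. Spray $2G^\alpha=g^{\alpha\delta}\big(\frac{\partial^2\mathscr{L}}{\partial x^\gamma\partial y^\delta}y^\gamma-\frac{\partial\mathscr{L}}{\partial x^\delta}\big)$, $N^\alpha_\mu=\partial G^\alpha/\partial y^\mu$, $\frac{\delta}{\delta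 x^\mu}=\frac{\partial}{\partial x^\mu}-N^\nu_\mu\frac{\partial}{\partial y^\nu}$, $\Gamma^\alpha_{\beta\gamma}=\tfrac12 g^{\alpha\sigma}\big(\frac{\delta g_{\sigma\gamma}}{\delta x^\beta}+\frac{\delta g_{\sigma\beta}}{\delta x^\gamma}-\frac{\delta g_{\beta\gamma}}{\delta x^\sigma}\big)$. Horizontal covariant derivative $(\nabla^{HC}_\alpha Z)^\beta=\frac{\delta Z^\beta}{\delta x^\alpha}+\Gamma^\beta_{\mu\alpha}Z^\mu$. For the section $s$: $D_\alpha s^\mu=\partial_\alpha s^\mu+N^\mu_\alpha(x,s(x))$, $D_Ws^\mu=W^\alpha D_\alpha s^\mu$; $s^*$ of a function on $E$ means its evaluation at $y=s(x)$. *)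

theory Defs
  imports "HOL-Analysis.Analysis"
begin

text \<open>The manifold M is represented by a coordinate
chart, an open set U of real^'n; points of TM are pairs (x,y) of real^'n,
and E = TM minus the zero section is U \<times> (UNIV - {0}).\<close>

definition dirder :: "'a::euclidean_space \<Rightarrow> ('a \<Rightarrow> real) \<Rightarrow> 'a \<Rightarrow> real" where
  "dirder b f p = frechet_derivative f (at p) b"

definition smooth_on :: "('a::euclidean_space \<Rightarrow> real) \<Rightarrow> 'a set \<Rightarrow> bool" where
  "smooth_on f S \<longleftrightarrow> (\<forall>bs. set bs \<subseteq> Basis \<longrightarrow> (foldr dirder bs f) differentiable_on S)"

definition pd :: "'n::finite \<Rightarrow> (real^'n \<Rightarrow> real) \<Rightarrow> real^'n \<Rightarrow> real" where
  "pd \<mu> f x = frechet_derivative f (at x) (axis \<mu> 1)"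

definition dX :: "'n::finite \<Rightarrow> (real^'n \<Rightarrow> real^'n \<Rightarrow> real) \<Rightarrow> real^'n \<Rightarrow> real^'n \<Rightarrow> real" where
  "dX \<mu> F x y = pd \<mu> (\<lambda>x'. F x' y) x"

definition dY :: "'n::finite \<Rightarrow> (real^'n \<Rightarrow> real^'n \<Rightarrow> real) \<Rightarrow> real^'n \<Rightarrow> real^'n \<Rightarrow> real" where
  "dY \<mu> F x y = pd \<mu> (\<lambda>y'. F x y') y"

definition fg :: "(real^'n \<Rightarrow> real^'n \<Rightarrow> real) \<Rightarrow> 'n::finite \<Rightarrow> 'n \<Rightarrow> real^'n \<Rightarrow> real^'n \<Rightarrow> real" where
  "fg L \<mu> \<nu> = dY \<mu> (dY \<nu> L)"

definition gmat :: "(real^'n \<Rightarrow> real^'n \<Rightarrow> real) \<Rightarrow> real^'n::finite \<Rightarrow> real^'n \<Rightarrow> real^'n^'n" where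
  "gmat L x y = (\<chi> \<mu> \<nu>. fg L \<mu> \<nu> x y)"

definition ginv :: "(real^'n \<Rightarrow> real^'n \<Rightarrow> real) \<Rightarrow> 'n::finite \<Rightarrow> 'n \<Rightarrow> real^'n \<Rightarrow> real^'n \<Rightarrow> real" where
  "ginv L \<mu> \<nu> x y = matrix_inv (gmat L x y) $ \<mu> $ \<nu>"

definition cartan :: "(real^'n \<Rightarrow> real^'n \<Rightarrow> real) \<Rightarrow> 'n::finite \<Rightarrow> 'n \<Rightarrow> 'n \<Rightarrow> real^'n \<Rightarrow> real^'n \<Rightarrow> real" where
  "cartan L \<alpha> \<beta> \<gamma> x y = dY \<alpha> (fg L \<beta> \<gamma>) x y / 2"

definition meanI :: "(real^'n \<Rightarrow> real^'n \<Rightarrow> real) \<Rightarrow> 'n::finite \<Rightarrow> real^'n \<Rightarrow> real^'n \<Rightarrow> real" where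
  "meanI L \<gamma> x y = (\<Sum>\<alpha>\<in>UNIV. \<Sum>\<beta>\<in>UNIV. ginv L \<alpha> \<beta> x y * cartan L \<alpha> \<beta> \<gamma> x y)"

definition spray :: "(real^'n \<Rightarrow> real^'n \<Rightarrow> real) \<Rightarrow> 'n::finite \<Rightarrow> real^'n \<Rightarrow> real^'n \<Rightarrow> real" where
  "spray L \<alpha> x y = (\<Sum>\<delta>\<in>UNIV. ginv L \<alpha> \<delta> x y *
       ((\<Sum>\<gamma>\<in>UNIV. dX \<gamma> (dY \<delta> L) x y * y $ \<gamma>) - dX \<delta> L x y)) / 2"

definition nlc :: "(real^'n \<Rightarrow> real^'n \<Rightarrow> real) \<Rightarrow> 'n::finite \<Rightarrow> 'n \<Rightarrow> real^'n \<Rightarrow> real^'n \<Rightarrow> real" where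
  "nlc L \<alpha> \<mu> = dY \<mu> (spray L \<alpha>)"

definition deltaX :: "(real^'n \<Rightarrow> real^'n \<Rightarrow> real) \<Rightarrow> 'n::finite \<Rightarrow> (real^'n \<Rightarrow> real^'n \<Rightarrow> real) \<Rightarrow> real^'n \<Rightarrow> real^'n \<Rightarrow> real" where
  "deltaX L \<mu> F x y = dX \<mu> F x y - (\<Sum>\<nu>\<in>UNIV. nlc L \<nu> \<mu> x y * dY \<nu> F x y)"

definition chrHC :: "(real^'n \<Rightarrow> real^'n \<Rightarrow> real) \<Rightarrow> 'n::finite \<Rightarrow> 'n \<Rightarrow> 'n \<Rightarrow> real^'n \<Rightarrow> real^'n \<Rightarrow> real" where
  "chrHC L \<alpha> \<beta> \<gamma> x y = (\<Sum>\<sigma>\<in>UNIV. ginv L \<alpha> \<sigma> x y *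
       (deltaX L \<beta> (fg L \<sigma> \<gamma>) x y + deltaX L \<gamma> (fg L \<sigma> \<beta>) x y - deltaX L \<sigma> (fg L \<beta> \<gamma>) x y)) / 2"

definition divHC :: "(real^'n \<Rightarrow> real^'n \<Rightarrow> real) \<Rightarrow> (real^'n \<Rightarrow> real^'n \<Rightarrow> real^'n) \<Rightarrow> real^'n::finite \<Rightarrow> real^'n \<Rightarrow> real" where
  "divHC L Z x y = (\<Sum>\<alpha>\<in>UNIV. deltaX L \<alpha> (\<lambda>x y. Z x y $ \<alpha>) x y
       + (\<Sum>\<mu>\<in>UNIV. chrHC L \<alpha> \<mu> \<alpha> x y * Z x y $ \<mu>))"

definition Dsec :: "(real^'n \<Rightarrow> real^'n \<Rightarrow> real) \<Rightarrow> (real^'n \<Rightarrow> real^'n) \<Rightarrow> 'n::finite \<Rightarrow> 'n \<Rightarrow> real^'n \<Rightarrow> real" where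
  "Dsec L s \<alpha> \<mu> x = pd \<alpha> (\<lambda>x'. s x' $ \<mu>) x + nlc L \<mu> \<alpha> x (s x)"

definition chrLC :: "(real^'n \<Rightarrow> real^'n^'n) \<Rightarrow> 'n::finite \<Rightarrow> 'n \<Rightarrow> 'n \<Rightarrow> real^'n \<Rightarrow> real" where
  "chrLC h \<alpha> \<beta> \<gamma> x = (\<Sum>\<sigma>\<in>UNIV. matrix_inv (h x) $ \<alpha> $ \<sigma> *
       (pd \<beta> (\<lambda>x'. h x' $ \<sigma> $ \<gamma>) x + pd \<gamma> (\<lambda>x'. h x' $ \<sigma> $ \<beta>) x
        - pd \<sigma> (\<lambda>x'. h x' $ \<beta> $ \<gamma>) x)) / 2"

definition divLC :: "(real^'n \<Rightarrow> real^'n^'n) \<Rightarrow> (real^'n \<Rightarrow> real^'n) \<Rightarrow> real^'n::finite \<Rightarrow> real" where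
  "divLC h W x = (\<Sum>\<alpha>\<in>UNIV. pd \<alpha> (\<lambda>x'. W x' $ \<alpha>) x
       + (\<Sum>\<mu>\<in>UNIV. chrLC h \<alpha> \<alpha> \<mu> x * W x $ \<mu>))"

end

theory Submission
  imports Defs
begin

text \<open>Along the graph of a section the chain rule gives, for every function F on the slit
  tangent bundle, \<open>\<partial>\<^sub>\<alpha>(F(x,s(x))) = \<delta>F/\<delta>x\<^sup>\<alpha> + \<partial>F/\<partial>y\<^sup>\<beta> D\<^sub>\<alpha>s\<^sup>\<beta>\<close>: the nonlinear
  connection terms inserted on both sides cancel. For \<open>F = Z\<^sup>\<alpha>\<close> this produces the last
  term of the identity. For \<open>F = g\<close> it turns the trace
  \<open>\<Gamma>\<^sup>\<alpha>\<^sub>\<alpha>\<^sub>\<mu> = g\<^sup>\<alpha>\<^sup>\<sigma> \<partial>\<^sub>\<mu>g\<^sub>\<alpha>\<^sub>\<sigma> / 2\<close> of the Levi-Civita symbols of \<open>s\<^sup>*g\<close> (the other two terms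
  cancel because \<open>g\<^sup>-\<^sup>1\<close> is symmetric) into the horizontal trace plus
  \<open>g\<^sup>\<alpha>\<^sup>\<sigma> C\<^sub>\<alpha>\<^sub>\<sigma>\<^sub>\<beta> D\<^sub>\<mu>s\<^sup>\<beta> = I\<^sub>\<beta> D\<^sub>\<mu>s\<^sup>\<beta>\<close>, which gives the mean Cartan torsion term. This needs
  the total symmetry of \<open>C\<close>, i.e. the symmetry of third \<open>y\<close>-derivatives of \<open>L\<close> (Schwarz's
  theorem, obtained from the mean value theorem applied to a double difference).\<close>

lemma frechet_derivative_cong_open:
  assumes "open S" "p \<in> S" "\<And>q. q \<in> S \<Longrightarrow> f q = g q"
  shows "frechet_derivative f (at p) = frechet_derivative g (at p)"
proof -
  have "(f has_derivative D) (at p) \<longleftrightarrow> (g has_derivative D) (at p)" for D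
    using assms has_derivative_transform_within_open by metis
  then show ?thesis
    unfolding frechet_derivative_def by simp
qed

lemma differentiable_at_cong_open:
  assumes "open S" "p \<in> S" "\<And>q. q \<in> S \<Longrightarrow> f q = g q" "f differentiable at p"
  shows "g differentiable at p"
  using assms has_derivative_transform_within_open unfolding differentiable_def by metis

lemma foldr_dirder_cong_open:
  assumes "open S" "\<And>q. q \<in> S \<Longrightarrow> f q = g q" "p \<in> S"
  shows "foldr dirder bs f p = foldr dirder bs g p"
  using assms(3)
proof (induction bs arbitrary: p)
  case (Cons b bs)
  have "frechet_derivative (foldr dirder bs f) (at p) = frechet_derivative (foldr dirder bs g) (at p)"
    by (rule frechet_derivative_cong_open[OF assms(1) Cons.prems Cons.IH])
  then show ?case
    unfolding foldr.simps o_apply dirder_def[of b] by simp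
qed (use assms(2) in simp)

lemma smooth_on_cong_open:
  assumes "open S" "\<And>p. p \<in> S \<Longrightarrow> f p = g p" "smooth_on f S"
  shows "smooth_on g S"
  unfolding smooth_on_def
proof (intro allI impI)
  fix bs :: "'a list"
  assume "set bs \<subseteq> Basis"
  then have "foldr dirder bs f differentiable_on S"
    using assms(3) unfolding smooth_on_def by blast
  then show "foldr dirder bs g differentiable_on S"
    using differentiable_at_cong_open[OF assms(1) _ foldr_dirder_cong_open[OF assms(1,2)]]
    by (simp add: differentiable_on_eq_differentiable_at[OF assms(1)])
qed

lemma smooth_on_dirder:
  assumes "smooth_on f S" "b \<in> Basis"
  shows "smooth_on (dirder b f) S"
  unfolding smooth_on_def
proof (intro allI impI)
  fix bs :: "'a list"
  assume "set bs \<subseteq> Basis"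
  with assms(2) have "set (bs @ [b]) \<subseteq> Basis"
    by simp
  then have "foldr dirder (bs @ [b]) f differentiable_on S"
    using assms(1) unfolding smooth_on_def by blast
  then show "foldr dirder bs (dirder b f) differentiable_on S"
    by simp
qed

lemma smooth_on_imp_differentiable_on: "smooth_on f S \<Longrightarrow> f differentiable_on S"
  unfolding smooth_on_def by (drule spec[of _ "[]"]) simp

lemma smooth_on_imp_differentiable_at:
  "smooth_on f S \<Longrightarrow> open S \<Longrightarrow> p \<in> S \<Longrightarrow> f differentiable at p"
  using smooth_on_imp_differentiable_on differentiable_on_eq_differentiable_at by blast

section \<open>Symmetry of second derivatives\<close>

lemma has_real_derivative_along_line:
  fixes f :: "'a::euclidean_space \<Rightarrow> real"
  assumes "f differentiable at (q + t *\<^sub>R u)"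
  shows "((\<lambda>t. f (q + t *\<^sub>R u)) has_real_derivative dirder u f (q + t *\<^sub>R u)) (at t)"
proof -
  let ?D = "frechet_derivative f (at (q + t *\<^sub>R u))"
  have fD: "(f has_derivative ?D) (at (q + t *\<^sub>R u))"
    using assms frechet_derivative_works by blast
  have "((\<lambda>t. q + t *\<^sub>R u) has_derivative (\<lambda>h. h *\<^sub>R u)) (at t)"
    by (auto intro!: derivative_eq_intros)
  from diff_chain_at[OF this fD]
  have "((\<lambda>t. f (q + t *\<^sub>R u)) has_derivative (\<lambda>h. ?D u * h)) (at t)"
    using linear_scale[OF has_derivative_linear[OF fD]] by (simp add: o_def mult.commute)
  then show ?thesis
    unfolding has_field_derivative_def dirder_def .
qed

lemma double_difference_mean_value:
  fixes f :: "'a::euclidean_space \<Rightarrow> real"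
  assumes "h > 0"
    and diff: "\<And>a b. 0 \<le> a \<Longrightarrow> a \<le> h \<Longrightarrow> 0 \<le> b \<Longrightarrow> b \<le> h \<Longrightarrow>
      f differentiable at (p + a *\<^sub>R u + b *\<^sub>R v) \<and>
      dirder u f differentiable at (p + a *\<^sub>R u + b *\<^sub>R v)"
  obtains a b where "0 < a" "a < h" "0 < b" "b < h"
    "f (p + h *\<^sub>R u + h *\<^sub>R v) - f (p + h *\<^sub>R u) - f (p + h *\<^sub>R v) + f p
       = h * h * dirder v (dirder u f) (p + a *\<^sub>R u + b *\<^sub>R v)"
proof -
  have shift: "p + a *\<^sub>R u + b *\<^sub>R v = (p + b *\<^sub>R v) + a *\<^sub>R u" for a b
    by (simp add: algebra_simps)
  have "\<exists>a. 0 < a \<and> a < h \<and>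
      (f (p + h *\<^sub>R u + h *\<^sub>R v) - f (p + h *\<^sub>R u)) - (f (p + 0 *\<^sub>R u + h *\<^sub>R v) - f (p + 0 *\<^sub>R u))
        = (h - 0) * (dirder u f (p + a *\<^sub>R u + h *\<^sub>R v) - dirder u f (p + a *\<^sub>R u))"
  proof (rule MVT2[OF \<open>h > 0\<close>])
    fix t assume "0 \<le> t" "t \<le> h"
    then show "((\<lambda>t. f (p + t *\<^sub>R u + h *\<^sub>R v) - f (p + t *\<^sub>R u)) has_real_derivative
        dirder u f (p + t *\<^sub>R u + h *\<^sub>R v) - dirder u f (p + t *\<^sub>R u)) (at t)"
      using diff[of t h] diff[of t 0] \<open>h > 0\<close> unfolding shift
      by (intro derivative_intros has_real_derivative_along_line) auto
  qed
  then obtain a where a: "0 < a" "a < h"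
    "f (p + h *\<^sub>R u + h *\<^sub>R v) - f (p + h *\<^sub>R u) - f (p + h *\<^sub>R v) + f p
       = h * (dirder u f (p + a *\<^sub>R u + h *\<^sub>R v) - dirder u f (p + a *\<^sub>R u))"
    by (auto simp: algebra_simps)
  have "\<exists>b. 0 < b \<and> b < h \<and>
      dirder u f (p + a *\<^sub>R u + h *\<^sub>R v) - dirder u f (p + a *\<^sub>R u + 0 *\<^sub>R v)
        = (h - 0) * dirder v (dirder u f) (p + a *\<^sub>R u + b *\<^sub>R v)"
  proof (rule MVT2[OF \<open>h > 0\<close>])
    fix t assume "0 \<le> t" "t \<le> h"
    then show "((\<lambda>t. dirder u f (p + a *\<^sub>R u + t *\<^sub>R v)) has_real_derivative
        dirder v (dirder u f) (p + a *\<^sub>R u + t *\<^sub>R v)) (at t)"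
      using diff[of a t] a by (intro has_real_derivative_along_line) auto
  qed
  then obtain b where "0 < b" "b < h"
    "dirder u f (p + a *\<^sub>R u + h *\<^sub>R v) - dirder u f (p + a *\<^sub>R u)
       = h * dirder v (dirder u f) (p + a *\<^sub>R u + b *\<^sub>R v)"
    by auto
  with a that show ?thesis
    by (metis mult.assoc)
qed

lemma small_parallelogram:
  fixes p u v :: "'a::real_normed_vector"
  assumes "\<delta> > 0"
  obtains h where "h > 0" "\<And>a b. 0 \<le> a \<Longrightarrow> a \<le> h \<Longrightarrow> 0 \<le> b \<Longrightarrow> b \<le> h \<Longrightarrow>
      p + a *\<^sub>R u + b *\<^sub>R v \<in> ball p \<delta>"
proof
  define c where "c = norm u + norm v + 1"
  define h where "h = \<delta> / (2 * c)"
  have "c > 0"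
    by (simp add: c_def add_nonneg_pos)
  then show h_pos: "h > 0"
    using assms by (simp add: h_def)
  fix a b :: real
  assume ab: "0 \<le> a" "a \<le> h" "0 \<le> b" "b \<le> h"
  have "norm (a *\<^sub>R u + b *\<^sub>R v) \<le> a * norm u + b * norm v"
    using norm_triangle_ineq[of "a *\<^sub>R u" "b *\<^sub>R v"] ab by simp
  also have "\<dots> \<le> h * c"
    using h_pos mult_right_mono[OF \<open>a \<le> h\<close> norm_ge_zero[of u]]
      mult_right_mono[OF \<open>b \<le> h\<close> norm_ge_zero[of v]]
    unfolding c_def distrib_left by linarith
  also have "\<dots> < \<delta>"
    using \<open>c > 0\<close> assms by (simp add: h_def)
  finally show "p + a *\<^sub>R u + b *\<^sub>R v \<in> ball p \<delta>"
    by (metis add.assoc add_diff_cancel_left' dist_commute dist_norm mem_ball)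
qed

lemma dirder_dirder_commute:
  fixes f :: "'a::euclidean_space \<Rightarrow> real"
  assumes f: "smooth_on f S" and S: "open S" and uv: "u \<in> Basis" "v \<in> Basis" and p: "p \<in> S"
  shows "dirder v (dirder u f) p = dirder u (dirder v f) p"
proof -
  let ?A = "dirder v (dirder u f)" and ?B = "dirder u (dirder v f)"
  have smooth: "smooth_on (dirder u f) S" "smooth_on (dirder v f) S" "smooth_on ?A S" "smooth_on ?B S"
    using f uv by (auto intro: smooth_on_dirder)
  note diff = smooth_on_imp_differentiable_at[OF _ S]
  have "\<bar>?A p - ?B p\<bar> \<le> 2 * \<epsilon>" if "\<epsilon> > 0" for \<epsilon>
  proof -
    have "continuous (at p) ?A" "continuous (at p) ?B"
      using diff[OF smooth(3) p] diff[OF smooth(4) p] by (auto intro: differentiable_imp_continuous_within)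
    then obtain \<delta>A \<delta>B where "\<delta>A > 0" "\<delta>B > 0"
      and A: "\<forall>q. dist q p < \<delta>A \<longrightarrow> dist (?A q) (?A p) < \<epsilon>"
      and B: "\<forall>q. dist q p < \<delta>B \<longrightarrow> dist (?B q) (?B p) < \<epsilon>"
      using \<open>\<epsilon> > 0\<close> unfolding continuous_at_eps_delta by blast
    obtain \<delta>S where "\<delta>S > 0" "ball p \<delta>S \<subseteq> S"
      using S p open_contains_ball by blast
    define \<delta> where "\<delta> = min \<delta>A (min \<delta>B \<delta>S)"
    have "\<delta> > 0" "ball p \<delta> \<subseteq> S"
      using \<open>\<delta>A > 0\<close> \<open>\<delta>B > 0\<close> \<open>\<delta>S > 0\<close> \<open>ball p \<delta>S \<subseteq> S\<close> by (auto simp: \<delta>_def)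
    have close: "\<bar>?A q - ?A p\<bar> < \<epsilon>" "\<bar>?B q - ?B p\<bar> < \<epsilon>" if "q \<in> ball p \<delta>" for q
      using that A B by (auto simp: \<delta>_def dist_commute dist_real_def)
    obtain h where "h > 0" and near: "\<And>a b. 0 \<le> a \<Longrightarrow> a \<le> h \<Longrightarrow> 0 \<le> b \<Longrightarrow> b \<le> h \<Longrightarrow>
        p + a *\<^sub>R u + b *\<^sub>R v \<in> ball p \<delta>"
      using small_parallelogram[OF \<open>\<delta> > 0\<close>] by blast
    have swap: "p + a *\<^sub>R v + b *\<^sub>R u = p + b *\<^sub>R u + a *\<^sub>R v" for a b
      by (simp add: algebra_simps)
    have inS: "p + a *\<^sub>R u + b *\<^sub>R v \<in> S" "p + b *\<^sub>R v + a *\<^sub>R u \<in> S"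
      if "0 \<le> a" "a \<le> h" "0 \<le> b" "b \<le> h" for a b
      using near[OF that] \<open>ball p \<delta> \<subseteq> S\<close> unfolding swap[of b a] by auto
    obtain a b where ab: "0 < a" "a < h" "0 < b" "b < h"
      "f (p + h *\<^sub>R u + h *\<^sub>R v) - f (p + h *\<^sub>R u) - f (p + h *\<^sub>R v) + f p
         = h * h * ?A (p + a *\<^sub>R u + b *\<^sub>R v)"
      using double_difference_mean_value[OF \<open>h > 0\<close>, of f p u v]
        diff[OF f inS(1)] diff[OF smooth(1) inS(1)] by blast
    obtain a' b' where a'b': "0 < a'" "a' < h" "0 < b'" "b' < h"
      "f (p + h *\<^sub>R v + h *\<^sub>R u) - f (p + h *\<^sub>R v) - f (p + h *\<^sub>R u) + f p
         = h * h * ?B (p + a' *\<^sub>R v + b' *\<^sub>R u)"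
      using double_difference_mean_value[OF \<open>h > 0\<close>, of f p v u]
        diff[OF f inS(2)] diff[OF smooth(2) inS(2)] by blast
    have "?A (p + a *\<^sub>R u + b *\<^sub>R v) = ?B (p + b' *\<^sub>R u + a' *\<^sub>R v)"
      using ab(5) a'b'(5) \<open>h > 0\<close> unfolding swap by (simp add: algebra_simps)
    moreover have "p + a *\<^sub>R u + b *\<^sub>R v \<in> ball p \<delta>" "p + b' *\<^sub>R u + a' *\<^sub>R v \<in> ball p \<delta>"
      using ab a'b' near by auto
    ultimately show ?thesis
      using close by fastforce
  qed
  then have "?A p - ?B p = 0"
    by (intro dense_eq0_I) (metis field_sum_of_halves half_gt_zero mult_2)
  then show ?thesis
    by simp
qed

lemma pd_cong_open:
  "open S \<Longrightarrow> p \<in> S \<Longrightarrow> (\<And>q. q \<in> S \<Longrightarrow> f q = g q) \<Longrightarrow> pd \<mu> f p = pd \<mu> g p"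
  unfolding pd_def using frechet_derivative_cong_open by metis

lemma dX_dY_of_has_derivative:
  fixes F :: "real^'n::finite \<Rightarrow> real^'n \<Rightarrow> real"
  assumes D: "(case_prod F has_derivative D) (at (x, y))"
  shows "dX \<mu> F x y = D (axis \<mu> 1, 0)" "dY \<mu> F x y = D (0, axis \<mu> 1)"
proof -
  have "((\<lambda>x'. (x', y)) has_derivative (\<lambda>v. (v, 0))) (at x)"
    by (auto intro!: derivative_eq_intros)
  from diff_chain_at[OF this D]
  have "((\<lambda>x'. F x' y) has_derivative (\<lambda>v. D (v, 0))) (at x)"
    by (simp add: o_def)
  then show "dX \<mu> F x y = D (axis \<mu> 1, 0)"
    unfolding dX_def pd_def by (metis frechet_derivative_at)
  have "((\<lambda>y'. (x, y')) has_derivative (\<lambda>v. (0, v))) (at y)"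
    by (auto intro!: derivative_eq_intros)
  from diff_chain_at[OF this D]
  have "((\<lambda>y'. F x y') has_derivative (\<lambda>v. D (0, v))) (at y)"
    by (simp add: o_def)
  then show "dY \<mu> F x y = D (0, axis \<mu> 1)"
    unfolding dY_def pd_def by (metis frechet_derivative_at)
qed

lemma dX_dY_eq_dirder:
  fixes F :: "real^'n::finite \<Rightarrow> real^'n \<Rightarrow> real"
  assumes "case_prod F differentiable at (x, y)"
  shows "dX \<mu> F x y = dirder (axis \<mu> 1, 0) (case_prod F) (x, y)"
    "dY \<mu> F x y = dirder (0, axis \<mu> 1) (case_prod F) (x, y)"
  using dX_dY_of_has_derivative[OF frechet_derivative_works[THEN iffD1, OF assms]]
  unfolding dirder_def by auto

lemma linear_vec_expansion:
  fixes g :: "real^'n::finite \<Rightarrow> real"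
  assumes "linear g"
  shows "g w = (\<Sum>\<beta>\<in>UNIV. w $ \<beta> * g (axis \<beta> 1))"
proof -
  have "g w = g (\<Sum>\<beta>\<in>UNIV. w $ \<beta> *\<^sub>R axis \<beta> 1)"
    using basis_expansion[of w] by (simp add: scalar_mult_eq_scaleR)
  also have "\<dots> = (\<Sum>\<beta>\<in>UNIV. w $ \<beta> * g (axis \<beta> 1))"
    using assms by (simp add: linear_sum linear.scaleR)
  finally show ?thesis .
qed

lemma differentiable_at_vec:
  fixes s :: "real^'m::finite \<Rightarrow> real^'n::finite"
  assumes "\<And>\<beta>. (\<lambda>x. s x $ \<beta>) differentiable at x"
  shows "s differentiable at x"
  unfolding differentiable_componentwise_within[of s x UNIV, simplified]
proof
  fix i :: "real^'n"
  assume "i \<in> Basis"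
  then obtain \<beta> where "i = axis \<beta> 1"
    by (auto simp: Basis_vec_def)
  then show "(\<lambda>x. s x \<bullet> i) differentiable at x"
    using assms[of \<beta>] by (simp add: cart_eq_inner_axis[symmetric])
qed

lemma pd_along_graph:
  fixes F :: "real^'n::finite \<Rightarrow> real^'n \<Rightarrow> real" and s :: "real^'n \<Rightarrow> real^'n"
  assumes F: "case_prod F differentiable at (x, s x)"
    and s: "\<And>\<beta>. (\<lambda>x. s x $ \<beta>) differentiable at x"
  shows "pd \<alpha> (\<lambda>x'. F x' (s x')) x
    = dX \<alpha> F x (s x) + (\<Sum>\<beta>\<in>UNIV. dY \<beta> F x (s x) * pd \<alpha> (\<lambda>x'. s x' $ \<beta>) x)"
proof -
  obtain s' where s': "(s has_derivative s') (at x)"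
    using differentiable_at_vec[OF s] unfolding differentiable_def by blast
  obtain D where D: "(case_prod F has_derivative D) (at (x, s x))"
    using F unfolding differentiable_def by blast
  have "((\<lambda>x'. (x', s x')) has_derivative (\<lambda>v. (v, s' v))) (at x)"
    using s' by (auto intro!: derivative_eq_intros)
  from diff_chain_at[OF this D]
  have "((\<lambda>x'. F x' (s x')) has_derivative (\<lambda>v. D (v, s' v))) (at x)"
    by (simp add: o_def)
  then have "pd \<alpha> (\<lambda>x'. F x' (s x')) x = D (axis \<alpha> 1, s' (axis \<alpha> 1))"
    unfolding pd_def by (metis frechet_derivative_at)
  also have "\<dots> = D (axis \<alpha> 1, 0) + D (0, s' (axis \<alpha> 1))"
    using linear_add[OF has_derivative_linear[OF D], of "(axis \<alpha> 1, 0)" "(0, s' (axis \<alpha> 1))"]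
    by simp
  finally have pdF: "pd \<alpha> (\<lambda>x'. F x' (s x')) x = D (axis \<alpha> 1, 0) + D (0, s' (axis \<alpha> 1))" .
  have "pd \<alpha> (\<lambda>x'. s x' $ \<beta>) x = s' (axis \<alpha> 1) $ \<beta>" for \<beta>
    unfolding pd_def
    using frechet_derivative_at[OF bounded_linear.has_derivative[OF bounded_linear_vec_nth s']] by metis
  moreover have "linear (\<lambda>w. D (0, w))"
    using linear_compose[OF bounded_linear.linear[OF bounded_linear_Pair[OF bounded_linear_zero
          bounded_linear_ident]] has_derivative_linear[OF D]] by (simp add: o_def)
  ultimately show ?thesis
    using pdF linear_vec_expansion[of "\<lambda>w. D (0, w)" "s' (axis \<alpha> 1)"] dX_dY_of_has_derivative[OF D]
    by (simp add: mult.commute)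
qed

definition smooth_on_slit :: "(real^'n::finite \<Rightarrow> real^'n \<Rightarrow> real) \<Rightarrow> (real^'n) set \<Rightarrow> bool" where
  "smooth_on_slit F U \<longleftrightarrow> smooth_on (case_prod F) (U \<times> (UNIV - {0}))"

lemma open_slit: "open U \<Longrightarrow> open (U \<times> (UNIV - {0 :: real^'n::finite}))"
  by (intro open_Times open_Diff) auto

lemma smooth_on_slit_differentiable:
  "open U \<Longrightarrow> smooth_on_slit F U \<Longrightarrow> x \<in> U \<Longrightarrow> y \<noteq> 0 \<Longrightarrow> case_prod F differentiable at (x, y)"
  unfolding smooth_on_slit_def by (rule smooth_on_imp_differentiable_at) (auto intro: open_slit)

lemma dX_dY_cong_slit:
  assumes "open U" "\<And>x y. x \<in> U \<Longrightarrow> y \<noteq> 0 \<Longrightarrow> F x y = G x y" "x \<in> U" "y \<noteq> 0"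
  shows "dX \<mu> F x y = dX \<mu> G x y" "dY \<mu> F x y = dY \<mu> G x y"
proof -
  show "dX \<mu> F x y = dX \<mu> G x y"
    unfolding dX_def by (rule pd_cong_open[OF assms(1,3)]) (simp add: assms(2,4))
  show "dY \<mu> F x y = dY \<mu> G x y"
    unfolding dY_def by (rule pd_cong_open[of "UNIV - {0}"]) (auto simp: assms(2-4))
qed

lemma zero_axis_in_Basis: "(0, axis \<mu> 1) \<in> (Basis :: ((real^'n::finite) \<times> (real^'n)) set)"
  unfolding Basis_prod_def Basis_vec_def by (rule UnI2, rule image_eqI[where x = "axis \<mu> 1"]) auto

lemma smooth_on_slit_dY:
  fixes F :: "real^'n::finite \<Rightarrow> real^'n \<Rightarrow> real"
  assumes U: "open U" and F: "smooth_on_slit F U"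
  shows "smooth_on_slit (dY \<mu> F) U"
proof -
  have "smooth_on (dirder (0, axis \<mu> 1) (case_prod F)) (U \<times> (UNIV - {0}))"
    using F zero_axis_in_Basis unfolding smooth_on_slit_def by (rule smooth_on_dirder)
  moreover have "dirder (0, axis \<mu> 1) (case_prod F) p = case_prod (dY \<mu> F) p"
    if p_in: "p \<in> U \<times> (UNIV - {0 :: real^'n})" for p
  proof -
    obtain x y where "p = (x, y)" "x \<in> U" "y \<noteq> 0"
      using p_in by auto
    then show ?thesis
      using dX_dY_eq_dirder(2)[OF smooth_on_slit_differentiable[OF U F]] by simp
  qed
  ultimately show ?thesis
    unfolding smooth_on_slit_def by (rule smooth_on_cong_open[OF open_slit[OF U], rotated])
qed

lemma dY_dY_commute:
  fixes F :: "real^'n::finite \<Rightarrow> real^'n \<Rightarrow> real"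
  assumes U: "open U" and F: "smooth_on_slit F U" and xy: "x \<in> U" "y \<noteq> 0"
  shows "dY a (dY b F) x y = dY b (dY a F) x y"
proof -
  have dirder_dY: "dY c (dY d F) x y
      = dirder (0, axis c 1) (dirder (0, axis d 1) (case_prod F)) (x, y)" for c d
  proof -
    have "dY c (dY d F) x y = dirder (0, axis c 1) (case_prod (dY d F)) (x, y)"
      using dX_dY_eq_dirder(2)[OF smooth_on_slit_differentiable[OF U smooth_on_slit_dY[OF U F] xy]] .
    also have "\<dots> = dirder (0, axis c 1) (dirder (0, axis d 1) (case_prod F)) (x, y)"
      unfolding dirder_def
    proof (intro frechet_derivative_cong_open[OF open_slit[OF U], THEN fun_cong])
      show "(x, y) \<in> U \<times> (UNIV - {0})"
        using xy by simp
      fix q :: "(real^'n) \<times> (real^'n)"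
      assume "q \<in> U \<times> (UNIV - {0})"
      then obtain x' y' where "q = (x', y')" "x' \<in> U" "y' \<noteq> 0"
        by auto
      then show "case_prod (dY d F) q = frechet_derivative (case_prod F) (at q) (0, axis d 1)"
        using dX_dY_eq_dirder(2)[OF smooth_on_slit_differentiable[OF U F]] by (simp add: dirder_def)
    qed
    finally show ?thesis .
  qed
  show ?thesis
    unfolding dirder_dY using F xy unfolding smooth_on_slit_def
    by (intro dirder_dirder_commute[OF _ open_slit[OF U] zero_axis_in_Basis zero_axis_in_Basis]) auto
qed

lemma fg_commute:
  "open U \<Longrightarrow> smooth_on_slit L U \<Longrightarrow> x \<in> U \<Longrightarrow> y \<noteq> 0 \<Longrightarrow> fg L a b x y = fg L b a x y"
  unfolding fg_def by (rule dY_dY_commute)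

lemma smooth_on_slit_fg: "open U \<Longrightarrow> smooth_on_slit L U \<Longrightarrow> smooth_on_slit (fg L a b) U"
  unfolding fg_def by (intro smooth_on_slit_dY)

lemma dY_fg_commute:
  assumes U: "open U" and L: "smooth_on_slit L U" and xy: "x \<in> U" "y \<noteq> 0"
  shows "dY \<beta> (fg L \<sigma> \<alpha>) x y = dY \<alpha> (fg L \<sigma> \<beta>) x y"
proof -
  have fg_alt: "fg L \<sigma> \<gamma> x' y' = dY \<gamma> (dY \<sigma> L) x' y'" if "x' \<in> U" "y' \<noteq> 0" for \<gamma> x' y'
    unfolding fg_def using dY_dY_commute[OF U L that] .
  have "dY \<beta> (fg L \<sigma> \<alpha>) x y = dY \<beta> (dY \<alpha> (dY \<sigma> L)) x y"
    using dX_dY_cong_slit(2)[OF U fg_alt xy] .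
  also have "\<dots> = dY \<alpha> (dY \<beta> (dY \<sigma> L)) x y"
    by (rule dY_dY_commute[OF U smooth_on_slit_dY[OF U L] xy])
  also have "\<dots> = dY \<alpha> (fg L \<sigma> \<beta>) x y"
    using dX_dY_cong_slit(2)[OF U fg_alt xy] by simp
  finally show ?thesis .
qed

lemma deltaX_fg_commute:
  assumes U: "open U" and L: "smooth_on_slit L U" and xy: "x \<in> U" "y \<noteq> 0"
  shows "deltaX L a (fg L b c) x y = deltaX L a (fg L c b) x y"
proof -
  have "\<And>x y. x \<in> U \<Longrightarrow> y \<noteq> 0 \<Longrightarrow> fg L b c x y = fg L c b x y"
    using fg_commute[OF U L] by blast
  from dX_dY_cong_slit[OF U this xy] show ?thesis
    unfolding deltaX_def by simp
qed

lemma matrix_inv_symmetric: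
  fixes A :: "real^'n^'n"
  assumes "invertible A" "transpose A = A"
  shows "matrix_inv A $ i $ j = matrix_inv A $ j $ i"
proof -
  let ?B = "matrix_inv A"
  have inv: "A ** ?B = mat 1 \<and> ?B ** A = mat 1"
    unfolding matrix_inv_def using assms(1)[unfolded invertible_def] by (rule someI_ex)
  have "transpose ?B ** A = mat 1"
    using arg_cong[OF conjunct1[OF inv], of transpose] assms(2) by (simp add: matrix_transpose_mul)
  then have "transpose ?B ** A ** ?B = ?B"
    by simp
  then have "transpose ?B = ?B"
    using inv by (metis matrix_mul_assoc matrix_mul_rid)
  then show ?thesis
    by (metis transpose_def vec_lambda_beta)
qed

lemma ginv_commute:
  assumes U: "open U" and L: "smooth_on_slit L U" and xy: "x \<in> U" "y \<noteq> 0"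
    and nondeg: "det (gmat L x y) \<noteq> 0"
  shows "ginv L a b x y = ginv L b a x y"
proof -
  have "invertible (gmat L x y)"
    using nondeg invertible_det_nz by blast
  moreover have "transpose (gmat L x y) = gmat L x y"
    using fg_commute[OF U L xy] by (simp add: transpose_def gmat_def vec_eq_iff)
  ultimately show ?thesis
    unfolding ginv_def by (rule matrix_inv_symmetric)
qed

lemma pd_along_graph_deltaX:
  assumes "case_prod F differentiable at (x, s x)" "\<And>\<beta>. (\<lambda>x. s x $ \<beta>) differentiable at x"
  shows "pd \<alpha> (\<lambda>x'. F x' (s x')) x
    = deltaX L \<alpha> F x (s x) + (\<Sum>\<beta>\<in>UNIV. dY \<beta> F x (s x) * Dsec L s \<alpha> \<beta> x)"
  using pd_along_graph[OF assms] unfolding deltaX_def Dsec_def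
  by (simp add: distrib_left sum.distrib algebra_simps)

section \<open>Traces of Christoffel symbols\<close>

lemma sum_symmetric_mult_antisymmetric:
  fixes G P :: "'n::finite \<Rightarrow> 'n \<Rightarrow> real"
  assumes "\<And>a b. G a b = G b a"
  shows "(\<Sum>a\<in>UNIV. \<Sum>b\<in>UNIV. G a b * (P a b - P b a)) = 0"
proof -
  have "(\<Sum>a\<in>UNIV. \<Sum>b\<in>UNIV. G a b * P b a) = (\<Sum>a\<in>UNIV. \<Sum>b\<in>UNIV. G a b * P a b)"
    by (subst sum.swap) (simp add: assms)
  then show ?thesis
    by (simp add: right_diff_distrib sum_subtractf)
qed

lemma trace_chrLC:
  assumes "\<And>a b. matrix_inv (h x) $ a $ b = matrix_inv (h x) $ b $ a"
  shows "(\<Sum>\<alpha>\<in>UNIV. chrLC h \<alpha> \<alpha> \<mu> x)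
    = (\<Sum>\<alpha>\<in>UNIV. \<Sum>\<sigma>\<in>UNIV. matrix_inv (h x) $ \<alpha> $ \<sigma> * pd \<mu> (\<lambda>x'. h x' $ \<sigma> $ \<alpha>) x) / 2"
proof -
  let ?G = "\<lambda>a b. matrix_inv (h x) $ a $ b" and ?P = "\<lambda>a b. pd a (\<lambda>x'. h x' $ b $ \<mu>) x"
  let ?A = "\<lambda>\<alpha>. \<Sum>\<sigma>\<in>UNIV. ?G \<alpha> \<sigma> * pd \<mu> (\<lambda>x'. h x' $ \<sigma> $ \<alpha>) x"
    and ?B = "\<lambda>\<alpha>. \<Sum>\<sigma>\<in>UNIV. ?G \<alpha> \<sigma> * (?P \<alpha> \<sigma> - ?P \<sigma> \<alpha>)"
  have "chrLC h \<alpha> \<alpha> \<mu> x = (?A \<alpha> + ?B \<alpha>) / 2" for \<alpha>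
    unfolding chrLC_def by (simp add: sum.distrib[symmetric] algebra_simps)
  then have "(\<Sum>\<alpha>\<in>UNIV. chrLC h \<alpha> \<alpha> \<mu> x) = (sum ?A UNIV + sum ?B UNIV) / 2"
    by (simp only: sum_divide_distrib[symmetric] sum.distrib)
  then show ?thesis
    using sum_symmetric_mult_antisymmetric[of ?G ?P, OF assms] by simp
qed

lemma trace_chrHC:
  assumes "\<And>a b. ginv L a b x y = ginv L b a x y"
    and "\<And>a b c. deltaX L a (fg L b c) x y = deltaX L a (fg L c b) x y"
  shows "(\<Sum>\<alpha>\<in>UNIV. chrHC L \<alpha> \<mu> \<alpha> x y)
    = (\<Sum>\<alpha>\<in>UNIV. \<Sum>\<sigma>\<in>UNIV. ginv L \<alpha> \<sigma> x y * deltaX L \<mu> (fg L \<sigma> \<alpha>) x y) / 2"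
proof -
  let ?G = "\<lambda>a b. ginv L a b x y" and ?P = "\<lambda>a b. deltaX L a (fg L b \<mu>) x y"
  let ?A = "\<lambda>\<alpha>. \<Sum>\<sigma>\<in>UNIV. ?G \<alpha> \<sigma> * deltaX L \<mu> (fg L \<sigma> \<alpha>) x y"
    and ?B = "\<lambda>\<alpha>. \<Sum>\<sigma>\<in>UNIV. ?G \<alpha> \<sigma> * (?P \<alpha> \<sigma> - ?P \<sigma> \<alpha>)"
  have "chrHC L \<alpha> \<mu> \<alpha> x y = (?A \<alpha> + ?B \<alpha>) / 2" for \<alpha>
    unfolding chrHC_def using assms(2)[of _ \<mu> \<alpha>]
    by (simp add: sum.distrib[symmetric] algebra_simps)
  then have "(\<Sum>\<alpha>\<in>UNIV. chrHC L \<alpha> \<mu> \<alpha> x y) = (sum ?A UNIV + sum ?B UNIV) / 2"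
    by (simp only: sum_divide_distrib[symmetric] sum.distrib)
  then show ?thesis
    using sum_symmetric_mult_antisymmetric[of ?G ?P, OF assms(1)] by simp
qed

lemma trace_chrLC_pullback:
  fixes L :: "real^'n::finite \<Rightarrow> real^'n \<Rightarrow> real" and s :: "real^'n \<Rightarrow> real^'n"
  assumes U: "open U" and L: "smooth_on_slit L U" and x: "x \<in> U" "s x \<noteq> 0"
    and nondeg: "det (gmat L x (s x)) \<noteq> 0" and s: "\<And>\<beta>. (\<lambda>x. s x $ \<beta>) differentiable at x"
  shows "(\<Sum>\<alpha>\<in>UNIV. chrLC (\<lambda>x. gmat L x (s x)) \<alpha> \<alpha> \<mu> x)
    = (\<Sum>\<alpha>\<in>UNIV. chrHC L \<alpha> \<mu> \<alpha> x (s x)) + (\<Sum>\<beta>\<in>UNIV. meanI L \<beta> x (s x) * Dsec L s \<mu> \<beta> x)"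
proof -
  let ?gi = "\<lambda>a b. ginv L a b x (s x)" and ?Ds = "\<lambda>\<beta>. Dsec L s \<mu> \<beta> x"
  let ?C = "\<lambda>\<alpha> \<sigma>. \<Sum>\<beta>\<in>UNIV. dY \<beta> (fg L \<sigma> \<alpha>) x (s x) * ?Ds \<beta>"
  have gi_sym: "?gi a b = ?gi b a" for a b
    by (rule ginv_commute[OF U L x nondeg])
  have "pd \<mu> (\<lambda>x'. gmat L x' (s x') $ \<sigma> $ \<alpha>) x = deltaX L \<mu> (fg L \<sigma> \<alpha>) x (s x) + ?C \<alpha> \<sigma>" for \<sigma> \<alpha>
    using pd_along_graph_deltaX[OF smooth_on_slit_differentiable[OF U smooth_on_slit_fg[OF U L] x] s]
    by (simp add: gmat_def)
  then have "(\<Sum>\<alpha>\<in>UNIV. chrLC (\<lambda>x. gmat L x (s x)) \<alpha> \<alpha> \<mu> x)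
      = (\<Sum>\<alpha>\<in>UNIV. \<Sum>\<sigma>\<in>UNIV. ?gi \<alpha> \<sigma> * deltaX L \<mu> (fg L \<sigma> \<alpha>) x (s x)) / 2
        + (\<Sum>\<alpha>\<in>UNIV. \<Sum>\<sigma>\<in>UNIV. ?gi \<alpha> \<sigma> * ?C \<alpha> \<sigma>) / 2"
    using trace_chrLC[of "\<lambda>x. gmat L x (s x)" x \<mu>] gi_sym unfolding ginv_def
    by (simp add: distrib_left sum.distrib add_divide_distrib)
  also have "(\<Sum>\<alpha>\<in>UNIV. \<Sum>\<sigma>\<in>UNIV. ?gi \<alpha> \<sigma> * deltaX L \<mu> (fg L \<sigma> \<alpha>) x (s x)) / 2
      = (\<Sum>\<alpha>\<in>UNIV. chrHC L \<alpha> \<mu> \<alpha> x (s x))"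
    using trace_chrHC[OF gi_sym deltaX_fg_commute[OF U L x]] by simp
  also have "(\<Sum>\<alpha>\<in>UNIV. \<Sum>\<sigma>\<in>UNIV. ?gi \<alpha> \<sigma> * ?C \<alpha> \<sigma>) / 2
      = (\<Sum>\<alpha>\<in>UNIV. \<Sum>\<sigma>\<in>UNIV. \<Sum>\<beta>\<in>UNIV. ?gi \<alpha> \<sigma> * cartan L \<alpha> \<sigma> \<beta> x (s x) * ?Ds \<beta>)"
  proof -
    have "dY \<beta> (fg L \<sigma> \<alpha>) x (s x) = 2 * cartan L \<alpha> \<sigma> \<beta> x (s x)" for \<alpha> \<sigma> \<beta>
      using dY_fg_commute[OF U L x] unfolding cartan_def by simp
    then show ?thesis
      by (simp add: sum_divide_distrib sum_distrib_left mult_ac)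
  qed
  also have "\<dots> = (\<Sum>\<beta>\<in>UNIV. meanI L \<beta> x (s x) * ?Ds \<beta>)"
    unfolding meanI_def sum_distrib_right
    by (subst sum.swap, rule sum.cong[OF refl], subst sum.swap, simp)
  finally show ?thesis .
qed

lemma divergence_decomposition:
  fixes pZ dZ I Z :: "'n::finite \<Rightarrow> real" and dyZ Ds trLC trHC :: "'n \<Rightarrow> 'n \<Rightarrow> real"
  assumes "\<And>\<alpha>. pZ \<alpha> = dZ \<alpha> + (\<Sum>\<beta>\<in>UNIV. dyZ \<beta> \<alpha> * Ds \<alpha> \<beta>)"
    and "\<And>\<mu>. (\<Sum>\<alpha>\<in>UNIV. trLC \<alpha> \<mu>) = (\<Sum>\<alpha>\<in>UNIV. trHC \<alpha> \<mu>) + (\<Sum>\<beta>\<in>UNIV. I \<beta> * Ds \<mu> \<beta>)"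
  shows "(\<Sum>\<alpha>\<in>UNIV. pZ \<alpha> + (\<Sum>\<mu>\<in>UNIV. trLC \<alpha> \<mu> * Z \<mu>))
    = (\<Sum>\<alpha>\<in>UNIV. dZ \<alpha> + (\<Sum>\<mu>\<in>UNIV. trHC \<alpha> \<mu> * Z \<mu>))
      + (\<Sum>\<mu>\<in>UNIV. I \<mu> * (\<Sum>\<alpha>\<in>UNIV. Z \<alpha> * Ds \<alpha> \<mu>))
      + (\<Sum>\<mu>\<in>UNIV. \<Sum>\<beta>\<in>UNIV. dyZ \<beta> \<mu> * Ds \<mu> \<beta>)"
proof -
  have contract: "(\<Sum>\<alpha>\<in>UNIV. \<Sum>\<mu>\<in>UNIV. c \<alpha> \<mu> * Z \<mu>) = (\<Sum>\<mu>\<in>UNIV. Z \<mu> * (\<Sum>\<alpha>\<in>UNIV. c \<alpha> \<mu>))"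
    for c :: "'n \<Rightarrow> 'n \<Rightarrow> real"
    by (subst sum.swap) (simp add: sum_distrib_left mult.commute)
  have "(\<Sum>\<mu>\<in>UNIV. Z \<mu> * (\<Sum>\<beta>\<in>UNIV. I \<beta> * Ds \<mu> \<beta>)) = (\<Sum>\<mu>\<in>UNIV. I \<mu> * (\<Sum>\<alpha>\<in>UNIV. Z \<alpha> * Ds \<alpha> \<mu>))"
    unfolding sum_distrib_left by (subst sum.swap) (simp add: mult_ac)
  with assms show ?thesis
    by (simp add: sum.distrib contract distrib_left)
qed

theorem mainTheorem4:
  fixes L :: "real^'n::finite \<Rightarrow> real^'n \<Rightarrow> real"
    and Z :: "real^'n \<Rightarrow> real^'n \<Rightarrow> real^'n"
    and s :: "real^'n \<Rightarrow> real^'n"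
    and U :: "(real^'n) set"
  assumes U_open: "open U"
    and L_smooth: "smooth_on (\<lambda>(x, y). L x y) (U \<times> (UNIV - {0}))"
    and L_hom: "\<And>x y t. x \<in> U \<Longrightarrow> y \<noteq> 0 \<Longrightarrow> t > 0 \<Longrightarrow> L x (t *\<^sub>R y) = t ^ 2 * L x y"
    and g_nondeg: "\<And>x y. x \<in> U \<Longrightarrow> y \<noteq> 0 \<Longrightarrow> det (gmat L x y) \<noteq> 0"
    and Z_smooth: "\<And>\<mu>. smooth_on (\<lambda>(x, y). Z x y $ \<mu>) (U \<times> (UNIV - {0}))"
    and s_smooth: "\<And>\<mu>. smooth_on (\<lambda>x. s x $ \<mu>) U"
    and s_nonzero: "\<And>x. x \<in> U \<Longrightarrow> s x \<noteq> 0"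
  shows "\<forall>x\<in>U.
     divLC (\<lambda>x. gmat L x (s x)) (\<lambda>x. Z x (s x)) x
       = divHC L Z x (s x)
         + (\<Sum>\<mu>\<in>UNIV. meanI L \<mu> x (s x) * (\<Sum>\<alpha>\<in>UNIV. Z x (s x) $ \<alpha> * Dsec L s \<alpha> \<mu> x))
         + (\<Sum>\<mu>\<in>UNIV. \<Sum>\<beta>\<in>UNIV. dY \<beta> (\<lambda>x y. Z x y $ \<mu>) x (s x) * Dsec L s \<mu> \<beta> x)"
proof
  fix x
  assume "x \<in> U"
  with s_nonzero have x: "x \<in> U" "s x \<noteq> 0"
    by auto
  have L: "smooth_on_slit L U"
    using L_smooth by (simp add: smooth_on_slit_def)
  have s: "(\<lambda>x. s x $ \<beta>) differentiable at x" for \<beta>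
    using smooth_on_imp_differentiable_at[OF s_smooth U_open x(1)] .
  have "case_prod (\<lambda>x y. Z x y $ \<alpha>) differentiable at (x, s x)" for \<alpha>
    using smooth_on_slit_differentiable[OF U_open _ x] Z_smooth by (simp add: smooth_on_slit_def)
  from pd_along_graph_deltaX[OF this s]
  have "pd \<alpha> (\<lambda>x'. Z x' (s x') $ \<alpha>) x = deltaX L \<alpha> (\<lambda>x y. Z x y $ \<alpha>) x (s x)
      + (\<Sum>\<beta>\<in>UNIV. dY \<beta> (\<lambda>x y. Z x y $ \<alpha>) x (s x) * Dsec L s \<alpha> \<beta> x)" for \<alpha> .
  moreover note trace_chrLC_pullback[OF U_open L x g_nondeg[OF x] s]
  ultimately show "divLC (\<lambda>x. gmat L x (s x)) (\<lambda>x. Z x (s x)) x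
       = divHC L Z x (s x)
         + (\<Sum>\<mu>\<in>UNIV. meanI L \<mu> x (s x) * (\<Sum>\<alpha>\<in>UNIV. Z x (s x) $ \<alpha> * Dsec L s \<alpha> \<mu> x))
         + (\<Sum>\<mu>\<in>UNIV. \<Sum>\<beta>\<in>UNIV. dY \<beta> (\<lambda>x y. Z x y $ \<mu>) x (s x) * Dsec L s \<mu> \<beta> x)"
    unfolding divLC_def divHC_def by (rule divergence_decomposition)
qed

end
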